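(* Let $X$ be a gamble, $I\subset\mathbb{R}$ an interval containing the image set of $X$, $\phi:I\to\mathbb{R}$ convex and $\psi:I\to\mathbb{R}$ concave. Let $\underline{P}$ be a 2-coherent lower prevision (defined on a set of gambles containing all gambles involved below, e.g. on all gambles) and $\overline{P}$ its conjugate upper prevision, and assume $\underline{P}(X)$ and $\overline{P}(X)$ are interior points of $I$. Then $$\underline{P}(\psi(X))\le\min\{\psi(\underline{P}(X)),\psi(\overline{P}(X))\},\qquad \overline{P}(\phi(X))\ge\max\{\phi(\underline{P}(X)),\phi(\overline{P}(X))\}.$$ Moreover: if $\phi'_+(\underline{P}(X))\ge 0$ then $\underline{P}(\phi(X))\ge\phi(\underline{P}(X))$; if $\phi'_-(\overline{P}(X))\le 0$ then $\underline{P}(\phi(X))\ge\phi(\overline{P}(X))$; if $\psi'_-(\overline{P}(X))\ge 0$ then $\overline{P}(\psi(X))\le\psi(\overline{P}(X))$; if $\psi'_+(\underline{P}(X))\le 0$ then $\overline{P}(\psi(X))\le\psi(\underline{P}(X))$.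
   Context: $\Pi$ is a partition of the sure event into pairwise disjoint non-impossible events; a gamble is a bounded map $X:\Pi\to\mathbb{R}$, with image set $\{X(\omega):\omega\in\Pi\}$; $f(X)$ denotes the gamble $\omega\mapsto f(X(\omega))$. A lower prevision $\underline{P}:\mathcal{D}\to\mathbb{R}$ on a set of gambles $\mathcal{D}$ is 2-coherent iff for all $X_0,X_1\in\mathcal{D}$, all $s_1\ge 0$ and all $s_0\in\mathbb{R}$, $\sup\big[s_1(X_1-\underline{P}(X_1))-s_0(X_0-\underline{P}(X_0))\big]\ge 0$. The conjugate upper prevision is $\overline{P}(Y)=-\underline{P}(-Y)$. $f'_+,f'_-$ denote right and left derivatives. *)

theory Defs
  imports "HOL-Analysis.Analysis"
begin

text \<open>The partition \<Pi> is modelled by a (nonempty) type 'w; a gamble is a bounded map 'w \<Rightarrow> real.\<close>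

definition gamble :: "('w \<Rightarrow> real) \<Rightarrow> bool" where
  "gamble X \<longleftrightarrow> bounded (range X)"

definition two_coherent :: "('w \<Rightarrow> real) set \<Rightarrow> (('w \<Rightarrow> real) \<Rightarrow> real) \<Rightarrow> bool" where
  "two_coherent D P \<longleftrightarrow> (\<forall>X0\<in>D. \<forall>X1\<in>D. \<forall>s1 s0. s1 \<ge> 0 \<longrightarrow>
      Sup (range (\<lambda>w. s1 * (X1 w - P X1) - s0 * (X0 w - P X0))) \<ge> 0)"

definition upper_prev :: "(('w \<Rightarrow> real) \<Rightarrow> real) \<Rightarrow> ('w \<Rightarrow> real) \<Rightarrow> real" where
  "upper_prev P Y = - P (\<lambda>w. - Y w)"

definition right_deriv :: "(real \<Rightarrow> real) \<Rightarrow> real \<Rightarrow> real" where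
  "right_deriv f x = Lim (at_right x) (\<lambda>y. (f y - f x) / (y - x))"

definition left_deriv :: "(real \<Rightarrow> real) \<Rightarrow> real \<Rightarrow> real" where
  "left_deriv f x = Lim (at_left x) (\<lambda>y. (f y - f x) / (y - x))"

end

theory Submission
  imports Defs
begin

text \<open>A convex function lies above the line through \<open>(c, f c)\<close> whose slope is either of its one-sided
  derivatives at an interior point \<open>c\<close>; dually a concave \<open>\<psi>\<close> satisfies \<open>\<psi> x \<le> \<psi> c + b (x - c)\<close>.
  For \<open>c = P X\<close> this bounds the gamble \<open>(\<psi>(X) - P \<psi>(X)) - b (X - P X)\<close> above by
  \<open>\<psi> c - P \<psi>(X)\<close>, so 2-coherence applied to the pair \<open>\<psi>(X)\<close>, \<open>X\<close> forces \<open>P \<psi>(X) \<le> \<psi> c\<close>; for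
  \<open>c = upper_prev P X = - P (-X)\<close> one pairs \<open>\<psi>(X)\<close> with \<open>-X\<close> instead. For a lower bound on
  \<open>P \<phi>(X)\<close> the roles are swapped: now the slope is the coefficient that 2-coherence requires to be
  nonnegative, whence the conditions on the one-sided derivatives. The bounds on the upper prevision
  follow by passing to \<open>-\<phi>\<close> and \<open>-\<psi>\<close>.\<close>

lemma convex_on_slope_mono:
  fixes f :: "real \<Rightarrow> real"
  assumes f: "convex_on I f" and I: "x \<in> I" "y \<in> I" "c \<in> I"
    and xy: "x \<le> y" "x \<noteq> c" "y \<noteq> c"
  shows "(f x - f c) / (x - c) \<le> (f y - f c) / (y - c)"
proof (cases "x = y")
  case False
  with xy have "x < y"
    by simp
  have swap: "(a - b) / (u - v) = (b - a) / (v - u)" for a b u v :: real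
    by (metis minus_diff_eq minus_divide_divide)
  consider "c < x" | "x < c" "c < y" | "y < c"
    using \<open>x < y\<close> xy by linarith
  then show ?thesis
  proof cases
    case 1
    then show ?thesis
      using convex_on_slope_le(1)[OF f I(3) I(2) 1 \<open>x < y\<close>]
        swap[of "f c" "f x" c x] swap[of "f c" "f y" c y]
      by simp
  next
    case 2
    then show ?thesis
      using convex_on_slope_le[OF f I(1) I(2) 2] swap[of "f c" "f y" c y] by linarith
  next
    case 3
    show ?thesis
      using convex_on_slope_le(2)[OF f I(1) I(3) \<open>x < y\<close> 3] .
  qed
qed simp

lemma mono_on_tendsto_Inf_at_right:
  fixes q :: "real \<Rightarrow> real"
  assumes "c < b" and mono: "mono_on {c<..<b} q" and bdd: "bdd_below (q ` {c<..<b})"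
  shows "(q \<longlongrightarrow> Inf (q ` {c<..<b})) (at_right c)"
proof (rule order_tendstoI)
  fix l assume "l < Inf (q ` {c<..<b})"
  then have "l < q y" if "y \<in> {c<..<b}" for y
    using cInf_lower[OF imageI[OF that] bdd] by linarith
  then show "\<forall>\<^sub>F y in at_right c. l < q y"
    unfolding eventually_at_right_field using \<open>c < b\<close> by (intro exI[of _ b]) auto
next
  fix u assume "Inf (q ` {c<..<b}) < u"
  with \<open>c < b\<close> have "\<exists>v\<in>q ` {c<..<b}. v < u"
    by (intro cInf_lessD) auto
  then obtain y0 where y0: "y0 \<in> {c<..<b}" "q y0 < u"
    by auto
  have "q y < u" if "c < y" "y < y0" for y
    using mono_onD[OF mono, of y y0] that y0 by auto
  then show "\<forall>\<^sub>F y in at_right c. q y < u"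
    unfolding eventually_at_right_field using y0 by (intro exI[of _ y0]) auto
qed

lemma convex_on_tendsto_right_deriv:
  fixes f :: "real \<Rightarrow> real"
  assumes f: "convex_on I f" and c: "c \<in> interior I"
  shows "((\<lambda>y. (f y - f c) / (y - c)) \<longlongrightarrow> right_deriv f c) (at_right c)"
proof -
  define q where "q y = (f y - f c) / (y - c)" for y
  obtain e where e: "e > 0" "ball c e \<subseteq> I"
    using c mem_interior by blast
  have near_c: "y \<in> I" if "\<bar>y - c\<bar> < e" for y
    using e that by (auto simp: dist_real_def)
  have "c \<in> I"
    using c interior_subset by blast
  have "mono_on {c<..<c + e} q"
  proof (rule mono_onI)
    fix r s assume "r \<in> {c<..<c + e}" "s \<in> {c<..<c + e}" "r \<le> s"
    then show "q r \<le> q s"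
      unfolding q_def using near_c \<open>c \<in> I\<close> by (intro convex_on_slope_mono[OF f]) auto
  qed
  moreover have "bdd_below (q ` {c<..<c + e})"
  proof (rule bdd_belowI2)
    fix y assume "y \<in> {c<..<c + e}"
    then show "q (c - e / 2) \<le> q y"
      unfolding q_def using near_c \<open>e > 0\<close> \<open>c \<in> I\<close> by (intro convex_on_slope_mono[OF f]) auto
  qed
  ultimately have lim: "(q \<longlongrightarrow> Inf (q ` {c<..<c + e})) (at_right c)"
    using \<open>e > 0\<close> by (intro mono_on_tendsto_Inf_at_right) auto
  then have "right_deriv f c = Inf (q ` {c<..<c + e})"
    unfolding right_deriv_def q_def[symmetric] by (rule tendsto_Lim[rotated]) simp
  with lim show ?thesis
    by (simp add: q_def[abs_def])
qed

lemma convex_on_reflect: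
  fixes f :: "real \<Rightarrow> real"
  assumes f: "convex_on I f"
  shows "convex_on (uminus ` I) (\<lambda>x. f (- x))"
  unfolding convex_on_def
proof (intro conjI ballI allI impI)
  show "convex (uminus ` I)"
    using f by (simp add: convex_negations convex_on_imp_convex)
  fix x y u v :: real
  assume xy: "x \<in> uminus ` I" "y \<in> uminus ` I" and uv: "0 \<le> u" "0 \<le> v" "u + v = 1"
  then have "- x \<in> I" "- y \<in> I"
    by auto
  then have "f (u *\<^sub>R (- x) + v *\<^sub>R (- y)) \<le> u * f (- x) + v * f (- y)"
    using f uv unfolding convex_on_def by blast
  then show "f (- (u *\<^sub>R x + v *\<^sub>R y)) \<le> u * f (- x) + v * f (- y)"
    by simp
qed

lemma convex_on_tendsto_left_deriv:
  fixes f :: "real \<Rightarrow> real"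
  assumes f: "convex_on I f" and c: "c \<in> interior I"
  shows "((\<lambda>y. (f y - f c) / (y - c)) \<longlongrightarrow> left_deriv f c) (at_left c)"
proof -
  have "- c \<in> interior (uminus ` I)"
    using c by (simp add: interior_negations)
  from convex_on_tendsto_right_deriv[OF convex_on_reflect[OF f] this]
  have "((\<lambda>y. - ((f (- y) - f c) / (y - - c))) \<longlongrightarrow> - right_deriv (\<lambda>x. f (- x)) (- c)) (at_right (- c))"
    by (intro tendsto_minus) simp
  then have lim: "((\<lambda>y. (f y - f c) / (y - c)) \<longlongrightarrow> - right_deriv (\<lambda>x. f (- x)) (- c)) (at_left c)"
    unfolding filterlim_at_left_to_right by (simp add: divide_minus_right[symmetric] algebra_simps)
  then have "left_deriv f c = - right_deriv (\<lambda>x. f (- x)) (- c)"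
    unfolding left_deriv_def by (rule tendsto_Lim[rotated]) simp
  with lim show ?thesis
    by simp
qed

lemma convex_on_slope_limit_le:
  fixes f :: "real \<Rightarrow> real"
  assumes f: "convex_on I f" and c: "c \<in> interior I" and x: "x \<in> I"
    and F: "F \<noteq> bot" "F \<le> at c"
    and lim: "((\<lambda>y. (f y - f c) / (y - c)) \<longlongrightarrow> a) F"
  shows "f c + a * (x - c) \<le> f x"
proof -
  define q where "q y = (f y - f c) / (y - c)" for y
  have "c \<in> I"
    using c interior_subset by blast
  have "\<forall>\<^sub>F y in at c. y \<in> I \<and> y \<noteq> c"
    using c interior_subset
    by (auto simp: eventually_at_filter eventually_nhds intro!: exI[of _ "interior I"])
  then have near: "\<forall>\<^sub>F y in F. y \<in> I \<and> y \<noteq> c"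
    using F(2) by (rule filter_leD[rotated])
  consider "x < c" | "x = c" | "c < x"
    by linarith
  then show ?thesis
  proof cases
    case 1
    have "\<forall>\<^sub>F y in F. x < y"
      using F(2) order_tendstoD(1)[OF tendsto_ident_at 1] by (rule filter_leD)
    then have "\<forall>\<^sub>F y in F. q x \<le> q y"
      using near by eventually_elim (use 1 x \<open>c \<in> I\<close> in \<open>auto simp: q_def intro!: convex_on_slope_mono[OF f]\<close>)
    then have "q x \<le> a"
      using lim F(1) unfolding q_def by (intro tendsto_lowerbound) auto
    then have "a * (x - c) \<le> q x * (x - c)"
      using 1 by (intro mult_right_mono_neg) auto
    then show ?thesis
      using 1 by (simp add: q_def)
  next
    case 2
    then show ?thesis by simp
  next
    case 3
    have "\<forall>\<^sub>F y in F. y < x"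
      using F(2) order_tendstoD(2)[OF tendsto_ident_at 3] by (rule filter_leD)
    then have "\<forall>\<^sub>F y in F. q y \<le> q x"
      using near by eventually_elim (use 3 x \<open>c \<in> I\<close> in \<open>auto simp: q_def intro!: convex_on_slope_mono[OF f]\<close>)
    then have "a \<le> q x"
      using lim F(1) unfolding q_def by (intro tendsto_upperbound) auto
    then have "a * (x - c) \<le> q x * (x - c)"
      using 3 by (intro mult_right_mono) auto
    then show ?thesis
      using 3 by (simp add: q_def)
  qed
qed

lemma convex_on_right_deriv_le:
  fixes f :: "real \<Rightarrow> real"
  assumes "convex_on I f" "c \<in> interior I" "x \<in> I"
  shows "f c + right_deriv f c * (x - c) \<le> f x"
  using assms convex_on_tendsto_right_deriv[OF assms(1,2)]
  by (intro convex_on_slope_limit_le[where F = "at_right c"]) (auto simp: at_le)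

lemma convex_on_left_deriv_le:
  fixes f :: "real \<Rightarrow> real"
  assumes "convex_on I f" "c \<in> interior I" "x \<in> I"
  shows "f c + left_deriv f c * (x - c) \<le> f x"
  using assms convex_on_tendsto_left_deriv[OF assms(1,2)]
  by (intro convex_on_slope_limit_le[where F = "at_left c"]) (auto simp: at_le)

lemma right_deriv_uminus:
  fixes f :: "real \<Rightarrow> real"
  assumes "convex_on I f" "c \<in> interior I"
  shows "right_deriv (\<lambda>x. - f x) c = - right_deriv f c"
proof -
  have "((\<lambda>y. - ((f y - f c) / (y - c))) \<longlongrightarrow> - right_deriv f c) (at_right c)"
    by (intro tendsto_minus convex_on_tendsto_right_deriv[OF assms])
  then show ?thesis
    unfolding right_deriv_def by (intro tendsto_Lim) (simp_all add: minus_divide_left)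
qed

lemma left_deriv_uminus:
  fixes f :: "real \<Rightarrow> real"
  assumes "convex_on I f" "c \<in> interior I"
  shows "left_deriv (\<lambda>x. - f x) c = - left_deriv f c"
proof -
  have "((\<lambda>y. - ((f y - f c) / (y - c))) \<longlongrightarrow> - left_deriv f c) (at_left c)"
    by (intro tendsto_minus convex_on_tendsto_left_deriv[OF assms])
  then show ?thesis
    unfolding left_deriv_def by (intro tendsto_Lim) (simp_all add: minus_divide_left)
qed

lemma two_coherent_bound_nonneg:
  assumes "two_coherent D P" "X0 \<in> D" "X1 \<in> D" "s1 \<ge> 0"
    and "\<And>w. s1 * (X1 w - P X1) - s0 * (X0 w - P X0) \<le> K"
  shows "0 \<le> K"
proof -
  have "0 \<le> Sup (range (\<lambda>w. s1 * (X1 w - P X1) - s0 * (X0 w - P X0)))"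
    using assms(1-4) unfolding two_coherent_def by blast
  also have "\<dots> \<le> K"
    using assms(5) by (intro cSUP_least) auto
  finally show ?thesis .
qed

lemma two_coherent_le_of_le_affine:
  assumes "two_coherent D P" "Y \<in> D" "X \<in> D"
    and "\<And>w. Y w \<le> k + s * (X w - P X)"
  shows "P Y \<le> k"
proof -
  have "1 * (Y w - P Y) - s * (X w - P X) \<le> k - P Y" for w
    using assms(4)[of w] by simp
  then have "0 \<le> k - P Y"
    by (rule two_coherent_bound_nonneg[OF assms(1,3,2) zero_le_one])
  then show ?thesis
    by simp
qed

lemma two_coherent_ge_of_ge_affine:
  assumes "two_coherent D P" "Y \<in> D" "X \<in> D" "s \<ge> 0"
    and "\<And>w. k + s * (X w - P X) \<le> Y w"
  shows "k \<le> P Y"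
proof -
  have "s * (X w - P X) - 1 * (Y w - P Y) \<le> P Y - k" for w
    using assms(5)[of w] by simp
  then have "0 \<le> P Y - k"
    by (rule two_coherent_bound_nonneg[OF assms(1,2,3,4)])
  then show ?thesis
    by simp
qed

lemma lower_prev_concave_le:
  fixes X :: "'w \<Rightarrow> real" and \<psi> :: "real \<Rightarrow> real"
  assumes coh: "two_coherent D P"
    and D: "X \<in> D" "(\<lambda>w. - X w) \<in> D" "(\<lambda>w. \<psi> (X w)) \<in> D"
    and \<psi>: "concave_on I \<psi>" and X: "range X \<subseteq> I"
    and int: "P X \<in> interior I" "upper_prev P X \<in> interior I"
  shows "P (\<lambda>w. \<psi> (X w)) \<le> min (\<psi> (P X)) (\<psi> (upper_prev P X))"
proof -
  have cvx: "convex_on I (\<lambda>x. - \<psi> x)"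
    using \<psi> by (simp add: concave_on_def)
  have tangent: "- \<psi> c + right_deriv (\<lambda>x. - \<psi> x) c * (X w - c) \<le> - \<psi> (X w)"
    if "c \<in> interior I" for c w
    using X that by (intro convex_on_right_deriv_le[OF cvx]) auto
  have "P (\<lambda>w. \<psi> (X w)) \<le> \<psi> (P X)"
    using tangent[OF int(1)]
    by (intro two_coherent_le_of_le_affine[OF coh D(3,1), of _ "- right_deriv (\<lambda>x. - \<psi> x) (P X)"])
      (simp add: algebra_simps)
  moreover have "P (\<lambda>w. \<psi> (X w)) \<le> \<psi> (upper_prev P X)"
    using tangent[OF int(2)]
    by (intro two_coherent_le_of_le_affine[OF coh D(3,2), of _ "right_deriv (\<lambda>x. - \<psi> x) (upper_prev P X)"])
      (simp add: upper_prev_def algebra_simps)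
  ultimately show ?thesis
    by simp
qed

lemma lower_prev_convex_ge_of_right_deriv_nonneg:
  fixes X :: "'w \<Rightarrow> real" and \<phi> :: "real \<Rightarrow> real"
  assumes coh: "two_coherent D P" and D: "X \<in> D" "(\<lambda>w. \<phi> (X w)) \<in> D"
    and \<phi>: "convex_on I \<phi>" and X: "range X \<subseteq> I"
    and int: "P X \<in> interior I" and deriv: "right_deriv \<phi> (P X) \<ge> 0"
  shows "\<phi> (P X) \<le> P (\<lambda>w. \<phi> (X w))"
  using X by (intro two_coherent_ge_of_ge_affine[OF coh D(2,1) deriv]
      convex_on_right_deriv_le[OF \<phi> int]) auto

lemma lower_prev_convex_ge_of_left_deriv_nonpos:
  fixes X :: "'w \<Rightarrow> real" and \<phi> :: "real \<Rightarrow> real"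
  assumes coh: "two_coherent D P" and D: "(\<lambda>w. - X w) \<in> D" "(\<lambda>w. \<phi> (X w)) \<in> D"
    and \<phi>: "convex_on I \<phi>" and X: "range X \<subseteq> I"
    and int: "upper_prev P X \<in> interior I" and deriv: "left_deriv \<phi> (upper_prev P X) \<le> 0"
  shows "\<phi> (upper_prev P X) \<le> P (\<lambda>w. \<phi> (X w))"
proof (rule two_coherent_ge_of_ge_affine[OF coh D(2,1)])
  show "0 \<le> - left_deriv \<phi> (upper_prev P X)"
    using deriv by simp
  fix w
  have "\<phi> (upper_prev P X) + left_deriv \<phi> (upper_prev P X) * (X w - upper_prev P X) \<le> \<phi> (X w)"
    using X by (intro convex_on_left_deriv_le[OF \<phi> int]) auto
  then show "\<phi> (upper_prev P X) + - left_deriv \<phi> (upper_prev P X) * (- X w - P (\<lambda>w. - X w))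
      \<le> \<phi> (X w)"
    by (simp add: upper_prev_def algebra_simps)
qed

theorem theorem4:
  fixes X :: "'w \<Rightarrow> real" and I :: "real set"
    and \<phi> \<psi> :: "real \<Rightarrow> real"
    and D :: "('w \<Rightarrow> real) set" and P :: "('w \<Rightarrow> real) \<Rightarrow> real"
  assumes gambles: "\<forall>Y\<in>D. gamble Y"
    and X_gamble: "gamble X"
    and I_interval: "is_interval I"
    and range_X: "range X \<subseteq> I"
    and phi_convex: "convex_on I \<phi>"
    and psi_concave: "concave_on I \<psi>"
    and coh: "two_coherent D P"
    and inD: "X \<in> D" "(\<lambda>w. - X w) \<in> D"
      "(\<lambda>w. \<phi> (X w)) \<in> D" "(\<lambda>w. - \<phi> (X w)) \<in> D"
      "(\<lambda>w. \<psi> (X w)) \<in> D" "(\<lambda>w. - \<psi> (X w)) \<in> D"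
    and int_low: "P X \<in> interior I"
    and int_up: "upper_prev P X \<in> interior I"
  shows "P (\<lambda>w. \<psi> (X w)) \<le> min (\<psi> (P X)) (\<psi> (upper_prev P X)) \<and>
    upper_prev P (\<lambda>w. \<phi> (X w)) \<ge> max (\<phi> (P X)) (\<phi> (upper_prev P X)) \<and>
    (right_deriv \<phi> (P X) \<ge> 0 \<longrightarrow> P (\<lambda>w. \<phi> (X w)) \<ge> \<phi> (P X)) \<and>
    (left_deriv \<phi> (upper_prev P X) \<le> 0 \<longrightarrow> P (\<lambda>w. \<phi> (X w)) \<ge> \<phi> (upper_prev P X)) \<and>
    (left_deriv \<psi> (upper_prev P X) \<ge> 0 \<longrightarrow> upper_prev P (\<lambda>w. \<psi> (X w)) \<le> \<psi> (upper_prev P X)) \<and>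
    (right_deriv \<psi> (P X) \<le> 0 \<longrightarrow> upper_prev P (\<lambda>w. \<psi> (X w)) \<le> \<psi> (P X))"
proof -
  have neg_phi: "concave_on I (\<lambda>x. - \<phi> x)" and neg_psi: "convex_on I (\<lambda>x. - \<psi> x)"
    using phi_convex psi_concave by (simp_all add: concave_on_def)
  have "max (\<phi> (P X)) (\<phi> (upper_prev P X)) \<le> upper_prev P (\<lambda>w. \<phi> (X w))"
    using lower_prev_concave_le[where \<psi> = "\<lambda>x. - \<phi> x", OF coh inD(1,2,4) neg_phi range_X int_low int_up]
    by (simp add: upper_prev_def[of P "\<lambda>w. \<phi> (X w)"])
  moreover have "left_deriv \<psi> (upper_prev P X) \<ge> 0 \<longrightarrow>
      upper_prev P (\<lambda>w. \<psi> (X w)) \<le> \<psi> (upper_prev P X)"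
    using lower_prev_convex_ge_of_left_deriv_nonpos[where \<phi> = "\<lambda>x. - \<psi> x",
        OF coh inD(2,6) neg_psi range_X int_up] left_deriv_uminus[OF neg_psi int_up]
    by (auto simp: upper_prev_def[of P "\<lambda>w. \<psi> (X w)"])
  moreover have "right_deriv \<psi> (P X) \<le> 0 \<longrightarrow> upper_prev P (\<lambda>w. \<psi> (X w)) \<le> \<psi> (P X)"
    using lower_prev_convex_ge_of_right_deriv_nonneg[where \<phi> = "\<lambda>x. - \<psi> x",
        OF coh inD(1,6) neg_psi range_X int_low] right_deriv_uminus[OF neg_psi int_low]
    by (auto simp: upper_prev_def[of P "\<lambda>w. \<psi> (X w)"])
  ultimately show ?thesis
    using lower_prev_concave_le[OF coh inD(1,2,5) psi_concave range_X int_low int_up]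
      lower_prev_convex_ge_of_right_deriv_nonneg[OF coh inD(1,3) phi_convex range_X int_low]
      lower_prev_convex_ge_of_left_deriv_nonpos[OF coh inD(2,3) phi_convex range_X int_up]
    by blast
qed

end
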